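(* Let $2<q<\frac{10}{3}$ and $J(u)=\frac12\int_{\mathbb{R}^2}(|u_x|^2+|D_x^{-1}u_y|^2)\,dx\,dy-\frac1q\int_{\mathbb{R}^2}|u|^q\,dx\,dy$. For every $a>0$, the functional $J$ is bounded from below and coercive on $S(a)$.
   Context: For $h:\mathbb{R}^2\to\mathbb{R}$ let $D_x^{-1}h(x,y)=\int_{-\infty}^x h(s,y)\,ds$. Let $Y=\{g_x: g\in C_0^\infty(\mathbb{R}^2)\}$ with inner product $\langle u,v\rangle_X=\int_{\mathbb{R}^2}(u_xv_x+D_x^{-1}u_y\,D_x^{-1}v_y+uv)\,dx\,dy$ and induced norm $\|\cdot\|$. The space $X$ consists of all $u:\mathbb{R}^2\to\mathbb{R}$ for which there is a sequence $(u_n)\subset Y$ with $u_n\to u$ a.e. and $\|u_j-u_k\|\to0$ as $j,k\to\infty$; it is a Hilbert space. For $a>0$, $S(a)=\{u\in X:\int_{\mathbb{R}^2}u^2=a^2\}$. *)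

theory Defs
  imports "HOL-Analysis.Analysis"
begin

definition px :: "(real \<times> real \<Rightarrow> real) \<Rightarrow> real \<times> real \<Rightarrow> real" where
  "px f = (\<lambda>(x, y). deriv (\<lambda>s. f (s, y)) x)"

definition py :: "(real \<times> real \<Rightarrow> real) \<Rightarrow> real \<times> real \<Rightarrow> real" where
  "py f = (\<lambda>(x, y). deriv (\<lambda>t. f (x, t)) y)"

fun pderivs :: "bool list \<Rightarrow> (real \<times> real \<Rightarrow> real) \<Rightarrow> real \<times> real \<Rightarrow> real" where
  "pderivs [] f = f"
| "pderivs (True # ds) f = px (pderivs ds f)"
| "pderivs (False # ds) f = py (pderivs ds f)"

definition smooth2 :: "(real \<times> real \<Rightarrow> real) \<Rightarrow> bool" where
  "smooth2 f \<longleftrightarrow> (\<forall>ds. continuous_on UNIV (pderivs ds f) \<and>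
      (\<forall>x y. (\<lambda>s. pderivs ds f (s, y)) differentiable (at x) \<and>
             (\<lambda>t. pderivs ds f (x, t)) differentiable (at y)))"

definition C0inf :: "(real \<times> real \<Rightarrow> real) set" where
  "C0inf = {g. smooth2 g \<and> compact (closure {z. g z \<noteq> 0})}"

definition Dxinv :: "(real \<times> real \<Rightarrow> real) \<Rightarrow> real \<times> real \<Rightarrow> real" where
  "Dxinv h = (\<lambda>(x, y). set_lebesgue_integral lborel {..x} (\<lambda>s. h (s, y)))"

definition Yspace :: "(real \<times> real \<Rightarrow> real) set" where
  "Yspace = {px g | g. g \<in> C0inf}"

definition Ykin :: "(real \<times> real \<Rightarrow> real) \<Rightarrow> real" where
  "Ykin u = integral\<^sup>L lborel (\<lambda>z. (px u z)\<^sup>2 + (Dxinv (py u) z)\<^sup>2)"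

definition L2sq :: "(real \<times> real \<Rightarrow> real) \<Rightarrow> real" where
  "L2sq u = integral\<^sup>L lborel (\<lambda>z. (u z)\<^sup>2)"

definition Ynorm2 :: "(real \<times> real \<Rightarrow> real) \<Rightarrow> real" where
  "Ynorm2 u = Ykin u + L2sq u"

definition approx_seq :: "(real \<times> real \<Rightarrow> real) \<Rightarrow> (nat \<Rightarrow> real \<times> real \<Rightarrow> real) \<Rightarrow> bool" where
  "approx_seq u s \<longleftrightarrow> (\<forall>n. s n \<in> Yspace) \<and>
     (AE z in lborel. (\<lambda>n. s n z) \<longlonglongrightarrow> u z) \<and>
     (\<forall>e>0. \<exists>N. \<forall>j\<ge>N. \<forall>k\<ge>N. Ynorm2 (\<lambda>z. s j z - s k z) < e)"

definition Xspace :: "(real \<times> real \<Rightarrow> real) set" where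
  "Xspace = {u. \<exists>s. approx_seq u s}"

text \<open>Extension of the gradient part to X, as the limit along an approximating sequence
  (independent of the chosen sequence).\<close>
definition Xkin :: "(real \<times> real \<Rightarrow> real) \<Rightarrow> real" where
  "Xkin u = lim (\<lambda>n. Ykin ((SOME s. approx_seq u s) n))"

definition Xnorm :: "(real \<times> real \<Rightarrow> real) \<Rightarrow> real" where
  "Xnorm u = sqrt (Xkin u + L2sq u)"

definition Ssphere :: "real \<Rightarrow> (real \<times> real \<Rightarrow> real) set" where
  "Ssphere a = {u \<in> Xspace. L2sq u = a\<^sup>2}"

definition Jfun :: "real \<Rightarrow> (real \<times> real \<Rightarrow> real) \<Rightarrow> real" where
  "Jfun q u = Xkin u / 2 - (1 / q) * integral\<^sup>L lborel (\<lambda>z. \<bar>u z\<bar> powr q)"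

end

theory Submission
  imports Defs
begin

(* For u = g_x with g smooth and compactly supported, D_x^{-1} u_y = g_y, so the kinetic
   term is K(u) = \<integral> u_x^2 + g_y^2. The fundamental theorem of calculus in x gives
   u(x,y)^2 <= 2 \<integral> |u u_x| dx; in y, after moving the x-derivative from u onto g_y by
   parts, it gives \<integral> u(x,y)^2 dx <= 2 \<integral>\<integral> |u_x g_y|. Multiplying and using Cauchy-Schwarz
   yields the anisotropic Gagliardo-Nirenberg inequality \<integral> u^4 <= 4 |u|_2 K(u)^(3/2).
   Interpolating |u|^q between u^2 and u^4 at the scale t = (1 + K)^(3/4) and passing to X
   by Fatou's lemma gives \<integral> |u|^q <= E_a (1 + K(u))^(3(q-2)/4) on S(a). The exponent is
   below 1 exactly when q < 10/3, so J(u) >= K(u)/4 - C_a, which gives both claims. *)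

section \<open>Elementary inequalities\<close>

lemma le_sqrt_mult_sqrt_if_le_means:
  fixes I X Y :: real
  assumes h: "\<And>t. t > 0 \<Longrightarrow> I \<le> (t * X + Y / t) / 2" and X: "0 \<le> X" and Y: "0 \<le> Y"
  shows "I \<le> sqrt X * sqrt Y"
proof (cases "X > 0 \<and> Y > 0")
  case True
  define t where "t = sqrt Y / sqrt X"
  have sx: "sqrt X > 0" "sqrt X * sqrt X = X" and sy: "sqrt Y > 0" "sqrt Y * sqrt Y = Y"
    using True by auto
  have "t * X = sqrt Y / sqrt X * (sqrt X * sqrt X)" using sx(2) by (simp add: t_def)
  also have "\<dots> = sqrt X * sqrt Y" using sx(1) by (simp add: field_simps)
  finally have "t * X = sqrt X * sqrt Y" .
  moreover have "t > 0" using sx sy by (simp add: t_def)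
  moreover have "Y / t = sqrt X * sqrt Y" unfolding t_def using sx sy by (simp add: field_simps)
  ultimately show ?thesis using h by fastforce
next
  case False
  show ?thesis
  proof (rule ccontr)
    assume "\<not> ?thesis"
    then have I: "I > 0" using False X Y by auto
    show False
    proof (cases "X = 0")
      case True
      define t where "t = (Y + 1) / I"
      have "t > 0" using I Y by (simp add: t_def)
      moreover have "Y / t < I" using I Y by (simp add: t_def field_simps)
      ultimately show False using h True I by fastforce
    next
      case False
      then have "Y = 0" "X > 0" using \<open>\<not> (X > 0 \<and> Y > 0)\<close> X Y by auto
      then show False using h[of "I / X"] I by simp
    qed
  qed
qed

lemma abs_powr_le_interpolation:
  fixes x t q :: real
  assumes t: "t > 0" and q: "2 \<le> q" "q \<le> 4"
  shows "\<bar>x\<bar> powr q \<le> t powr (q - 2) * x\<^sup>2 + t powr (q - 4) * x ^ 4"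
proof (cases "x = 0")
  case True
  then show ?thesis using q by simp
next
  case False
  define y where "y = \<bar>x\<bar>"
  have y: "y > 0" using False by (simp add: y_def)
  have x2: "x\<^sup>2 = y powr 2" and x4: "x ^ 4 = y powr 4"
    using y by (simp_all add: y_def)
  have nn: "0 \<le> t powr (q - 2) * x\<^sup>2" "0 \<le> t powr (q - 4) * x ^ 4" by simp_all
  show ?thesis
  proof (cases "y \<le> t")
    case True
    have "\<bar>x\<bar> powr q = y powr ((q - 2) + 2)" by (simp add: y_def)
    also have "\<dots> = y powr (q - 2) * y powr 2" by (rule powr_add)
    also have "\<dots> \<le> t powr (q - 2) * y powr 2"
      using True y q by (intro mult_right_mono powr_mono2) auto
    finally show ?thesis unfolding x2 using nn(2) by linarith
  next
    case False
    have "\<bar>x\<bar> powr q = y powr ((q - 4) + 4)" by (simp add: y_def)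
    also have "\<dots> = y powr (q - 4) * y powr 4" by (rule powr_add)
    also have "\<dots> \<le> t powr (q - 4) * y powr 4"
      using False y q t by (intro mult_right_mono powr_mono2') auto
    finally show ?thesis unfolding x4 using nn(1) by linarith
  qed
qed

lemma powr_le_linear_plus_const:
  fixes c \<theta> \<epsilon> :: real
  assumes \<theta>: "0 < \<theta>" "\<theta> < 1" and \<epsilon>: "0 < \<epsilon>"
  shows "\<exists>C. \<forall>x\<ge>0. c * x powr \<theta> \<le> \<epsilon> * x + C"
proof -
  define M where "M = (\<bar>c\<bar> / \<epsilon> + 1) powr (1 / (1 - \<theta>))"
  have base: "\<bar>c\<bar> / \<epsilon> + 1 > 0" using \<epsilon> by (simp add: add_nonneg_pos)
  have M: "M > 0" unfolding M_def using base by simp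
  have "M powr (\<theta> - 1) = (\<bar>c\<bar> / \<epsilon> + 1) powr (1 / (1 - \<theta>) * (\<theta> - 1))"
    unfolding M_def by (rule powr_powr)
  also have "1 / (1 - \<theta>) * (\<theta> - 1) = -1" using \<theta> by (simp add: field_simps)
  finally have "\<bar>c\<bar> * M powr (\<theta> - 1) = \<bar>c\<bar> / (\<bar>c\<bar> / \<epsilon> + 1)"
    using base by (simp add: powr_minus_divide)
  also have "\<dots> \<le> \<epsilon>" using \<epsilon> by (simp add: field_simps)
  finally have cM: "\<bar>c\<bar> * M powr (\<theta> - 1) \<le> \<epsilon>" .
  show ?thesis
  proof (intro exI allI impI)
    fix x :: real assume x: "0 \<le> x"
    show "c * x powr \<theta> \<le> \<epsilon> * x + \<bar>c\<bar> * M powr \<theta>"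
    proof (cases "x \<le> M")
      case True
      then have "c * x powr \<theta> \<le> \<bar>c\<bar> * M powr \<theta>"
        using x \<theta> by (intro mult_mono abs_ge_self powr_mono2) auto
      moreover have "0 \<le> \<epsilon> * x" using x \<epsilon> by simp
      ultimately show ?thesis by linarith
    next
      case False
      then have "x powr \<theta> = x * x powr (\<theta> - 1)" using M by (simp add: powr_diff)
      also have "\<dots> \<le> x * M powr (\<theta> - 1)"
        using False M \<theta> by (intro mult_left_mono powr_mono2') auto
      finally have "x powr \<theta> \<le> x * M powr (\<theta> - 1)" .
      then have "c * x powr \<theta> \<le> \<bar>c\<bar> * (x * M powr (\<theta> - 1))"
        by (intro mult_mono abs_ge_self) auto
      also have "\<dots> = x * (\<bar>c\<bar> * M powr (\<theta> - 1))" by (simp add: ac_simps)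
      also have "\<dots> \<le> x * \<epsilon>" using cM x by (rule mult_left_mono)
      finally show ?thesis by (simp add: mult.commute add_increasing2)
    qed
  qed
qed

lemma integral_inner_le_sqrt_mult:
  fixes f h :: "'a::euclidean_space \<Rightarrow> 'b::real_inner"
  assumes f: "continuous_on (cbox a b) f" and h: "continuous_on (cbox a b) h"
  shows "integral (cbox a b) (\<lambda>z. inner (f z) (h z)) \<le>
    sqrt (integral (cbox a b) (\<lambda>z. (norm (f z))\<^sup>2)) * sqrt (integral (cbox a b) (\<lambda>z. (norm (h z))\<^sup>2))"
proof (rule le_sqrt_mult_sqrt_if_le_means)
  fix t :: real assume t: "t > 0"
  have pw: "inner (f z) (h z) \<le> (t * (norm (f z))\<^sup>2 + (norm (h z))\<^sup>2 / t) / 2" for z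
  proof -
    have n0: "0 \<le> (norm (t *\<^sub>R f z - h z))\<^sup>2" by simp
    have "(norm (t *\<^sub>R f z - h z))\<^sup>2 =
        t * t * (norm (f z))\<^sup>2 - 2 * t * inner (f z) (h z) + (norm (h z))\<^sup>2"
      by (simp add: power2_norm_eq_inner inner_diff_left inner_diff_right inner_commute algebra_simps)
    moreover have "t * (t * (norm (f z))\<^sup>2 + (norm (h z))\<^sup>2 / t) = t * t * (norm (f z))\<^sup>2 + (norm (h z))\<^sup>2"
      using t by (simp add: field_simps)
    ultimately have "t * (2 * inner (f z) (h z)) \<le> t * (t * (norm (f z))\<^sup>2 + (norm (h z))\<^sup>2 / t)"
      using n0 by linarith
    then have "2 * inner (f z) (h z) \<le> t * (norm (f z))\<^sup>2 + (norm (h z))\<^sup>2 / t"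
      using t by (rule mult_left_le_imp_le)
    then show ?thesis by simp
  qed
  have "integral (cbox a b) (\<lambda>z. inner (f z) (h z)) \<le>
      integral (cbox a b) (\<lambda>z. (t * (norm (f z))\<^sup>2 + (norm (h z))\<^sup>2 / t) / 2)"
    using pw t by (intro integral_le integrable_continuous continuous_intros f h) auto
  also have "\<dots> = (t * integral (cbox a b) (\<lambda>z. (norm (f z))\<^sup>2) + integral (cbox a b) (\<lambda>z. (norm (h z))\<^sup>2) / t) / 2"
  proof -
    have "(\<lambda>z. t * (norm (f z))\<^sup>2) integrable_on cbox a b" "(\<lambda>z. (norm (h z))\<^sup>2 / t) integrable_on cbox a b"
      using t by (auto intro!: integrable_continuous continuous_intros f h)
    then show ?thesis by (simp add: integral_add integral_divide)
  qed
  finally show "integral (cbox a b) (\<lambda>z. inner (f z) (h z)) \<le> \<dots>" .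
qed (intro integral_nonneg integrable_continuous continuous_intros f h; simp)+

lemma integral_abs_mult_le_sqrt_mult:
  fixes f h :: "'a::euclidean_space \<Rightarrow> real"
  assumes "continuous_on (cbox a b) f" and "continuous_on (cbox a b) h"
  shows "integral (cbox a b) (\<lambda>z. \<bar>f z * h z\<bar>) \<le>
    sqrt (integral (cbox a b) (\<lambda>z. (f z)\<^sup>2)) * sqrt (integral (cbox a b) (\<lambda>z. (h z)\<^sup>2))"
  using integral_inner_le_sqrt_mult[of a b "\<lambda>z. \<bar>f z\<bar>" "\<lambda>z. \<bar>h z\<bar>"] assms
  by (simp add: abs_mult continuous_on_rabs)

lemma sqrt_integral_norm_add_le:
  fixes f h :: "'a::euclidean_space \<Rightarrow> 'b::real_inner"
  assumes f: "continuous_on (cbox a b) f" and h: "continuous_on (cbox a b) h"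
  shows "sqrt (integral (cbox a b) (\<lambda>z. (norm (f z + h z))\<^sup>2)) \<le>
    sqrt (integral (cbox a b) (\<lambda>z. (norm (f z))\<^sup>2)) + sqrt (integral (cbox a b) (\<lambda>z. (norm (h z))\<^sup>2))"
proof -
  define F H where "F = integral (cbox a b) (\<lambda>z. (norm (f z))\<^sup>2)"
    and "H = integral (cbox a b) (\<lambda>z. (norm (h z))\<^sup>2)"
  have nn: "0 \<le> F" "0 \<le> H" unfolding F_def H_def
    by (intro integral_nonneg integrable_continuous continuous_intros f h; simp)+
  have "(\<lambda>z. (norm (f z + h z))\<^sup>2) = (\<lambda>z. (norm (f z))\<^sup>2 + 2 * inner (f z) (h z) + (norm (h z))\<^sup>2)"
    by (simp add: power2_norm_eq_inner inner_add_left inner_add_right inner_commute algebra_simps)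
  then have "integral (cbox a b) (\<lambda>z. (norm (f z + h z))\<^sup>2) =
      F + 2 * integral (cbox a b) (\<lambda>z. inner (f z) (h z)) + H"
    unfolding F_def H_def by (simp add: integral_add integrable_continuous continuous_intros f h)
  also have "\<dots> \<le> (sqrt F + sqrt H)\<^sup>2"
    using integral_inner_le_sqrt_mult[OF f h] nn by (simp add: F_def H_def power2_sum)
  finally have "sqrt (integral (cbox a b) (\<lambda>z. (norm (f z + h z))\<^sup>2)) \<le> sqrt ((sqrt F + sqrt H)\<^sup>2)"
    by (rule real_sqrt_le_mono)
  then show ?thesis using nn by (simp add: F_def H_def)
qed

section \<open>Smooth functions with compact support\<close>

definition supp_in_square :: "(real \<times> real \<Rightarrow> real) \<Rightarrow> real \<Rightarrow> bool" where
  "supp_in_square f r \<longleftrightarrow> (\<forall>x y. f (x, y) \<noteq> 0 \<longrightarrow> \<bar>x\<bar> \<le> r \<and> \<bar>y\<bar> \<le> r)"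

lemma supp_in_square_mono: "supp_in_square f r \<Longrightarrow> r \<le> r' \<Longrightarrow> supp_in_square f r'"
  unfolding supp_in_square_def by (meson order_trans)

lemma supp_in_square_diff:
  "supp_in_square f r \<Longrightarrow> supp_in_square h r \<Longrightarrow> supp_in_square (\<lambda>z. f z - h z) r"
  unfolding supp_in_square_def by (metis diff_self)

lemma C0inf_supp_in_square:
  assumes "g \<in> C0inf"
  obtains r where "0 \<le> r" "supp_in_square g r"
proof -
  have "compact (closure {z. g z \<noteq> 0})" using assms unfolding C0inf_def by blast
  then have "bounded (closure {z. g z \<noteq> 0})" by (rule compact_imp_bounded)
  then obtain B where B: "\<And>z. z \<in> closure {z. g z \<noteq> 0} \<Longrightarrow> norm z \<le> B"
    unfolding bounded_iff by auto
  have "supp_in_square g (max B 0)" unfolding supp_in_square_def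
  proof (intro allI impI)
    fix x y assume "g (x, y) \<noteq> 0"
    then have "norm (x, y) \<le> B" using B closure_subset by (meson subsetD mem_Collect_eq)
    moreover have "\<bar>x\<bar> \<le> norm (x, y)" "\<bar>y\<bar> \<le> norm (x, y)"
      using norm_fst_le[of x y] norm_snd_le[of y x] by auto
    ultimately show "\<bar>x\<bar> \<le> max B 0 \<and> \<bar>y\<bar> \<le> max B 0" by linarith
  qed
  then show ?thesis using that[of "max B 0"] by simp
qed

lemma deriv_eq_0_outside_interval:
  fixes \<phi> :: "real \<Rightarrow> real"
  assumes \<phi>: "\<And>s. r < \<bar>s\<bar> \<Longrightarrow> \<phi> s = 0" and x: "r < \<bar>x\<bar>"
  shows "deriv \<phi> x = 0"
proof -
  have "open {s::real. r < \<bar>s\<bar>}" by (intro open_Collect_less continuous_intros)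
  then have "eventually (\<lambda>s. s \<in> {s. r < \<bar>s\<bar>}) (nhds x)"
    using x by (intro eventually_nhds_in_open) auto
  then have "eventually (\<lambda>s. \<phi> s = 0) (nhds x)"
    by eventually_elim (use \<phi> in auto)
  then have "(\<phi> has_real_derivative 0) (at x)"
    using DERIV_cong_ev[OF refl _ refl, of \<phi> "\<lambda>_. 0" x 0] by simp
  then show ?thesis by (rule DERIV_imp_deriv)
qed

lemma supp_in_square_px:
  assumes f: "supp_in_square f r"
  shows "supp_in_square (px f) r"
  unfolding supp_in_square_def
proof (intro allI impI)
  fix x y assume nz: "px f (x, y) \<noteq> 0"
  show "\<bar>x\<bar> \<le> r \<and> \<bar>y\<bar> \<le> r"
  proof (rule ccontr)
    assume "\<not> ?thesis"
    then consider "r < \<bar>y\<bar>" | "r < \<bar>x\<bar>" by linarith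
    then have "px f (x, y) = 0"
    proof cases
      case 1
      then have "(\<lambda>s. f (s, y)) = (\<lambda>s. 0)" using f unfolding supp_in_square_def by force
      then show ?thesis by (simp add: px_def)
    next
      case 2
      then show ?thesis
        using f unfolding px_def supp_in_square_def by (force intro: deriv_eq_0_outside_interval)
    qed
    with nz show False by contradiction
  qed
qed

lemma supp_in_square_py:
  assumes f: "supp_in_square f r"
  shows "supp_in_square (py f) r"
  unfolding supp_in_square_def
proof (intro allI impI)
  fix x y assume nz: "py f (x, y) \<noteq> 0"
  show "\<bar>x\<bar> \<le> r \<and> \<bar>y\<bar> \<le> r"
  proof (rule ccontr)
    assume "\<not> ?thesis"
    then consider "r < \<bar>x\<bar>" | "r < \<bar>y\<bar>" by linarith
    then have "py f (x, y) = 0"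
    proof cases
      case 1
      then have "(\<lambda>t. f (x, t)) = (\<lambda>t. 0)" using f unfolding supp_in_square_def by force
      then show ?thesis by (simp add: py_def)
    next
      case 2
      then show ?thesis
        using f unfolding py_def supp_in_square_def by (force intro: deriv_eq_0_outside_interval)
    qed
    with nz show False by contradiction
  qed
qed

lemma supp_in_square_pderivs: "supp_in_square f r \<Longrightarrow> supp_in_square (pderivs ds f) r"
proof (induction ds)
  case (Cons d ds)
  then show ?case by (cases d) (simp_all add: supp_in_square_px supp_in_square_py)
qed simp

lemma smooth2_continuous_on: "smooth2 g \<Longrightarrow> continuous_on S (pderivs ds g)"
  unfolding smooth2_def by (blast intro: continuous_on_subset)

lemma smooth2_has_derivative_x:
  assumes "smooth2 g"
  shows "((\<lambda>s. pderivs ds g (s, y)) has_real_derivative pderivs (True # ds) g (x, y)) (at x)"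
  using assms unfolding smooth2_def by (simp add: px_def DERIV_deriv_iff_real_differentiable)

lemma smooth2_has_derivative_y:
  assumes "smooth2 g"
  shows "((\<lambda>t. pderivs ds g (x, t)) has_real_derivative pderivs (False # ds) g (x, y)) (at y)"
  using assms unfolding smooth2_def by (simp add: py_def DERIV_deriv_iff_real_differentiable)

lemma pderivs_diff:
  assumes "smooth2 f" "smooth2 g"
  shows "pderivs ds (\<lambda>z. f z - g z) = (\<lambda>z. pderivs ds f z - pderivs ds g z)"
proof (induction ds)
  case (Cons d ds)
  have "pderivs (d # ds) (\<lambda>z. f z - g z) (x, y) = pderivs (d # ds) f (x, y) - pderivs (d # ds) g (x, y)"
    for x y
  proof (cases d)
    case True
    have "((\<lambda>s. pderivs ds f (s, y) - pderivs ds g (s, y)) has_real_derivative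
        pderivs (True # ds) f (x, y) - pderivs (True # ds) g (x, y)) (at x)"
      by (intro DERIV_diff smooth2_has_derivative_x assms)
    then show ?thesis using True Cons.IH by (simp add: px_def DERIV_imp_deriv)
  next
    case False
    have "((\<lambda>t. pderivs ds f (x, t) - pderivs ds g (x, t)) has_real_derivative
        pderivs (False # ds) f (x, y) - pderivs (False # ds) g (x, y)) (at y)"
      by (intro DERIV_diff smooth2_has_derivative_y assms)
    then show ?thesis using False Cons.IH by (simp add: py_def DERIV_imp_deriv)
  qed
  then show ?case by auto
qed simp

lemma smooth2_diff:
  assumes "smooth2 f" "smooth2 g"
  shows "smooth2 (\<lambda>z. f z - g z)"
  unfolding smooth2_def pderivs_diff[OF assms]
proof (intro allI conjI)
  fix ds x y
  show "continuous_on UNIV (\<lambda>z. pderivs ds f z - pderivs ds g z)"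
    using assms by (intro continuous_intros smooth2_continuous_on)
  show "(\<lambda>s. pderivs ds f (s, y) - pderivs ds g (s, y)) differentiable at x"
    using DERIV_diff[OF smooth2_has_derivative_x[OF assms(1), of ds y x]
        smooth2_has_derivative_x[OF assms(2), of ds y x]]
    by (auto simp: real_differentiable_def)
  show "(\<lambda>t. pderivs ds f (x, t) - pderivs ds g (x, t)) differentiable at y"
    using DERIV_diff[OF smooth2_has_derivative_y[OF assms(1), of ds x y]
        smooth2_has_derivative_y[OF assms(2), of ds x y]]
    by (auto simp: real_differentiable_def)
qed

lemma C0inf_diff:
  assumes "f \<in> C0inf" "g \<in> C0inf"
  shows "(\<lambda>z. f z - g z) \<in> C0inf"
proof -
  have "{z. f z - g z \<noteq> 0} \<subseteq> {z. f z \<noteq> 0} \<union> {z. g z \<noteq> 0}" by auto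
  then have sub: "closure {z. f z - g z \<noteq> 0} \<subseteq> closure {z. f z \<noteq> 0} \<union> closure {z. g z \<noteq> 0}"
    unfolding closure_Un[symmetric] by (rule closure_mono)
  have "compact (closure {z. f z \<noteq> 0} \<union> closure {z. g z \<noteq> 0})"
    using assms unfolding C0inf_def by auto
  then have "compact ((closure {z. f z \<noteq> 0} \<union> closure {z. g z \<noteq> 0}) \<inter> closure {z. f z - g z \<noteq> 0})"
    by (intro compact_Int_closed) auto
  then have "compact (closure {z. f z - g z \<noteq> 0})" using sub by (simp add: Int_absorb1)
  then show ?thesis using assms smooth2_diff unfolding C0inf_def by auto
qed

lemma Yspace_diff:
  assumes "f \<in> Yspace" "h \<in> Yspace"
  shows "(\<lambda>z. f z - h z) \<in> Yspace"
proof -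
  obtain g1 g2 where g: "g1 \<in> C0inf" "f = px g1" "g2 \<in> C0inf" "h = px g2"
    using assms unfolding Yspace_def by blast
  then have "(\<lambda>z. f z - h z) = px (\<lambda>z. g1 z - g2 z)"
    using pderivs_diff[of g1 g2 "[True]"] unfolding C0inf_def by simp
  then show ?thesis using C0inf_diff[of g1 g2] g unfolding Yspace_def by blast
qed

lemma
  fixes f :: "'a::euclidean_space \<Rightarrow> real"
  assumes f: "continuous_on UNIV f" and supp: "\<And>z. f z \<noteq> 0 \<Longrightarrow> z \<in> cbox a b"
  shows integrable_lborel_if_supp_in_cbox: "integrable lborel f"
    and integral_lborel_eq_integral_cbox: "integral\<^sup>L lborel f = integral (cbox a b) f"
proof -
  have eq: "(\<lambda>z. indicator (cbox a b) z *\<^sub>R f z) = f"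
    using supp by (auto simp: indicator_def fun_eq_iff)
  have si: "set_integrable lborel (cbox a b) f"
    unfolding set_integrable_def
    by (rule borel_integrable_compact) (auto intro: continuous_on_subset[OF f])
  then show "integrable lborel f" unfolding set_integrable_def eq .
  from set_borel_integral_eq_integral(2)[OF si]
  show "integral\<^sup>L lborel f = integral (cbox a b) f" unfolding set_lebesgue_integral_def eq .
qed

lemma integral_cbox_Pair_eq_iterated:
  fixes f :: "real \<times> real \<Rightarrow> real"
  assumes "continuous_on (cbox (a, c) (b, d)) f"
  shows "integral (cbox (a, c) (b, d)) f = integral {c..d} (\<lambda>y. integral {a..b} (\<lambda>x. f (x, y)))"
  using integral_prod_continuous[OF assms] integral_swap_continuous[of a c b d "\<lambda>x y. f (x, y)"] assms
  by simp

section \<open>A Gagliardo-Nirenberg inequality on Y\<close>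

abbreviation centered_square :: "real \<Rightarrow> (real \<times> real) set" where
  "centered_square R \<equiv> cbox (-R, -R) (R, R)"

lemma sq_eq_integral_of_deriv:
  fixes \<phi> \<phi>' :: "real \<Rightarrow> real"
  assumes \<phi>: "\<And>s. (\<phi> has_real_derivative \<phi>' s) (at s)" and "\<phi> a = 0" and "a \<le> x"
  shows "(\<phi> x)\<^sup>2 = integral {a..x} (\<lambda>s. 2 * \<phi> s * \<phi>' s)"
proof -
  have "((\<lambda>s. (\<phi> s)\<^sup>2) has_real_derivative 2 * \<phi> s * \<phi>' s) (at s within {a..x})" for s
    using DERIV_mult[OF \<phi> \<phi>, of s] by (auto simp: power2_eq_square algebra_simps intro: has_field_derivative_at_within)
  then have "((\<lambda>s. 2 * \<phi> s * \<phi>' s) has_integral ((\<phi> x)\<^sup>2 - (\<phi> a)\<^sup>2)) {a..x}"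
    using \<open>a \<le> x\<close> by (intro fundamental_theorem_of_calculus) (auto simp: has_real_derivative_iff_has_vector_derivative)
  then show ?thesis using \<open>\<phi> a = 0\<close> by (simp add: integral_unique)
qed

declare pderivs.simps(2,3) [simp del]

context
  fixes g :: "real \<times> real \<Rightarrow> real" and r R :: real
  assumes g: "g \<in> C0inf" and supp: "supp_in_square g r" and r: "0 \<le> r" "r < R"
begin

abbreviation "gx \<equiv> pderivs [True] g"
abbreviation "gxx \<equiv> pderivs [True, True] g"
abbreviation "gxy \<equiv> pderivs [False, True] g"
abbreviation "gy \<equiv> pderivs [False] g"

lemma smooth2_g: "smooth2 g"
  using g unfolding C0inf_def by blast

lemma pderivs_vanish_outside:
  assumes "R \<le> \<bar>x\<bar> \<or> R \<le> \<bar>y\<bar>"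
  shows "pderivs ds g (x, y) = 0"
  using supp_in_square_pderivs[OF supp, of ds] assms r unfolding supp_in_square_def by force

lemma pderivs_nonzero_in_square:
  assumes "pderivs ds g z \<noteq> 0"
  shows "z \<in> centered_square R"
proof -
  obtain x y where z: "z = (x, y)" by force
  then have "\<bar>x\<bar> < R \<and> \<bar>y\<bar> < R" using pderivs_vanish_outside[of x y ds] assms by force
  then show ?thesis using z by (auto simp: cbox_Pair_eq abs_less_iff)
qed

lemma continuous_on_pderivs_g [continuous_intros]:
  "continuous_on S a \<Longrightarrow> continuous_on S b \<Longrightarrow> continuous_on S (\<lambda>p. pderivs ds g (a p, b p))"
  "continuous_on T (\<lambda>z. pderivs ds g z)"
  "continuous_on T (\<lambda>(x, y). pderivs ds g (x, y))"
  using smooth2_continuous_on[OF smooth2_g]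
  by (auto intro: continuous_on_compose2[of UNIV] continuous_on_Pair simp: case_prod_beta')

lemma has_derivative_x_g:
  "((\<lambda>s. pderivs ds g (s, y)) has_real_derivative pderivs (True # ds) g (x, y)) (at x within S)"
  using smooth2_has_derivative_x[OF smooth2_g] has_field_derivative_at_within by blast

lemma has_derivative_y_g:
  "((\<lambda>t. pderivs ds g (x, t)) has_real_derivative pderivs (False # ds) g (x, y)) (at y within S)"
  using smooth2_has_derivative_y[OF smooth2_g] has_field_derivative_at_within by blast

lemma integral_gx:
  assumes "-R \<le> x"
  shows "integral {-R..x} (\<lambda>s. gx (s, y)) = g (x, y)"
proof -
  have "((\<lambda>s. gx (s, y)) has_integral (g (x, y) - g (-R, y))) {-R..x}"
    using assms has_derivative_x_g[of "[]"]
    by (intro fundamental_theorem_of_calculus) (auto simp: has_real_derivative_iff_has_vector_derivative)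
  moreover have "g (-R, y) = 0" using pderivs_vanish_outside[of "-R" y "[]"] r by simp
  ultimately show ?thesis by (simp add: integral_unique)
qed

(* smooth2 does not give symmetry of mixed partials, so the x-derivative of gy is obtained
   by writing gy as the x-primitive of gxy. *)
lemma gy_eq_integral_gxy:
  assumes "-R \<le> x"
  shows "gy (x, y) = integral {-R..x} (\<lambda>s. gxy (s, y))"
proof -
  have "((\<lambda>t. integral (cbox (-R) x) (\<lambda>s. gx (s, t))) has_field_derivative
      integral (cbox (-R) x) (\<lambda>s. gxy (s, y))) (at y within UNIV)"
  proof (rule leibniz_rule_field_derivative)
    show "\<And>t. (\<lambda>s. gx (s, t)) integrable_on cbox (-R) x"
      by (intro integrable_continuous continuous_intros)
    show "continuous_on (UNIV \<times> cbox (-R) x) (\<lambda>(t, s). gxy (s, t))"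
      by (simp add: case_prod_beta) (intro continuous_intros)
  qed (auto intro: has_derivative_y_g)
  then have "((\<lambda>t. g (x, t)) has_field_derivative integral {-R..x} (\<lambda>s. gxy (s, y))) (at y)"
    using integral_gx[OF assms] by simp
  moreover have "((\<lambda>t. g (x, t)) has_field_derivative gy (x, y)) (at y)"
    using has_derivative_y_g[of "[]" x y UNIV] by simp
  ultimately show ?thesis using DERIV_unique by blast
qed

lemma Dxinv_gxy: "Dxinv gxy = gy"
proof
  fix z :: "real \<times> real"
  obtain x y where z: "z = (x, y)" by force
  show "Dxinv gxy z = gy z"
  proof (cases "x < -R")
    case True
    have "indicator {..x} s *\<^sub>R gxy (s, y) = 0" for s
    proof (cases "s \<le> x")
      case True
      then have "R \<le> \<bar>s\<bar>" using \<open>x < -R\<close> by arith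
      then show ?thesis by (simp add: pderivs_vanish_outside)
    qed simp
    then have "(\<lambda>s. indicator {..x} s *\<^sub>R gxy (s, y)) = (\<lambda>s. 0)" by blast
    moreover have "gy (x, y) = 0" using True by (intro pderivs_vanish_outside) auto
    ultimately show ?thesis using z unfolding Dxinv_def set_lebesgue_integral_def by simp
  next
    case False
    have "indicator {..x} s *\<^sub>R gxy (s, y) = indicator {-R..x} s *\<^sub>R gxy (s, y)" for s
    proof (cases "-R \<le> s")
      case False
      then have "R \<le> \<bar>s\<bar>" by arith
      then show ?thesis by (simp add: pderivs_vanish_outside)
    qed (simp add: indicator_def)
    then have "(\<lambda>s. indicator {..x} s *\<^sub>R gxy (s, y)) = (\<lambda>s. indicator {-R..x} s *\<^sub>R gxy (s, y))"
      by blast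
    then have "Dxinv gxy z = (LINT s:{-R..x}|lborel. gxy (s, y))"
      using z unfolding Dxinv_def set_lebesgue_integral_def by simp
    also have "\<dots> = integral {-R..x} (\<lambda>s. gxy (s, y))"
      unfolding set_integrable_def
      by (rule set_borel_integral_eq_integral(2), unfold set_integrable_def, rule borel_integrable_compact)
        (auto intro!: continuous_intros)
    also have "\<dots> = gy z" using gy_eq_integral_gxy False z by simp
    finally show ?thesis .
  qed
qed

lemma gy_has_derivative_x:
  assumes "x \<in> {-R..R}"
  shows "((\<lambda>x. gy (x, y)) has_real_derivative gxy (x, y)) (at x within {-R..R})"
proof -
  have "((\<lambda>x. integral {-R..x} (\<lambda>s. gxy (s, y))) has_vector_derivative gxy (x, y)) (at x within {-R..R})"
    by (rule integral_has_vector_derivative[OF _ assms]) (intro continuous_intros)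
  then have "((\<lambda>x. gy (x, y)) has_vector_derivative gxy (x, y)) (at x within {-R..R})"
    by (rule has_vector_derivative_transform[OF assms, rotated]) (auto simp: gy_eq_integral_gxy)
  then show ?thesis by (simp add: has_real_derivative_iff_has_vector_derivative)
qed

lemma gx_sq_le_line_integral:
  "(gx (x, y))\<^sup>2 \<le> 2 * integral {-R..R} (\<lambda>s. \<bar>gx (s, y) * gxx (s, y)\<bar>)"
proof (cases "x \<in> {-R..R}")
  case False
  then have "gx (x, y) = 0" by (intro pderivs_vanish_outside) auto
  then show ?thesis
    by (simp add: integral_nonneg integrable_continuous_interval continuous_intros)
next
  case True
  have "(gx (x, y))\<^sup>2 = integral {-R..x} (\<lambda>s. 2 * gx (s, y) * gxx (s, y))"
    using True pderivs_vanish_outside[of "-R" y "[True]"]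
    by (intro sq_eq_integral_of_deriv has_derivative_x_g) auto
  also have "\<dots> \<le> integral {-R..x} (\<lambda>s. 2 * \<bar>gx (s, y) * gxx (s, y)\<bar>)"
    by (intro integral_le integrable_continuous_interval continuous_intros) (auto simp del: abs_mult)
  also have "\<dots> \<le> integral {-R..R} (\<lambda>s. 2 * \<bar>gx (s, y) * gxx (s, y)\<bar>)"
    using True by (intro integral_subset_le integrable_continuous_interval continuous_intros) auto
  finally show ?thesis by simp
qed

lemma abs_integral_gx_gxy_le:
  "\<bar>integral {-R..R} (\<lambda>x. gx (x, t) * gxy (x, t))\<bar> \<le> integral {-R..R} (\<lambda>x. \<bar>gxx (x, t) * gy (x, t)\<bar>)"
proof -
  have "((\<lambda>x. gxx (x, t) * gy (x, t) + gxy (x, t) * gx (x, t)) has_integral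
      (gx (R, t) * gy (R, t) - gx (-R, t) * gy (-R, t))) {-R..R}"
    using r has_derivative_x_g[of "[True]" t] gy_has_derivative_x
    by (intro fundamental_theorem_of_calculus)
      (auto intro!: DERIV_mult simp: has_real_derivative_iff_has_vector_derivative[symmetric] pderivs.simps)
  moreover have "gx (R, t) = 0" "gx (-R, t) = 0" using r by (auto intro: pderivs_vanish_outside)
  ultimately have "integral {-R..R} (\<lambda>x. gxx (x, t) * gy (x, t) + gxy (x, t) * gx (x, t)) = 0"
    by (simp add: integral_unique)
  moreover have "integral {-R..R} (\<lambda>x. gxx (x, t) * gy (x, t) + gxy (x, t) * gx (x, t)) =
      integral {-R..R} (\<lambda>x. gxx (x, t) * gy (x, t)) + integral {-R..R} (\<lambda>x. gx (x, t) * gxy (x, t))"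
    by (subst integral_add) (auto intro!: integrable_continuous_interval continuous_intros simp: mult.commute)
  ultimately have "integral {-R..R} (\<lambda>x. gx (x, t) * gxy (x, t)) = - integral {-R..R} (\<lambda>x. gxx (x, t) * gy (x, t))"
    by simp
  also have "\<bar>\<dots>\<bar> = norm (integral {-R..R} (\<lambda>x. gxx (x, t) * gy (x, t)))" by simp
  also have "\<dots> \<le> integral {-R..R} (\<lambda>x. \<bar>gxx (x, t) * gy (x, t)\<bar>)"
    by (rule integral_norm_bound_integral)
      (auto intro!: integrable_continuous_interval continuous_intros simp del: abs_mult)
  finally show ?thesis .
qed

lemma line_integral_gx_sq_le:
  "integral {-R..R} (\<lambda>x. (gx (x, y))\<^sup>2) \<le> 2 * integral (centered_square R) (\<lambda>z. \<bar>gxx z * gy z\<bar>)"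
proof (cases "y \<in> {-R..R}")
  case False
  then have "R \<le> \<bar>y\<bar>" by auto
  then have "(\<lambda>x. (gx (x, y))\<^sup>2) = (\<lambda>x. 0)" by (simp add: pderivs_vanish_outside)
  then show ?thesis by (simp add: integral_nonneg integrable_continuous continuous_intros)
next
  case True
  define c where "c t = integral {-R..R} (\<lambda>x. gx (x, t) * gxy (x, t))" for t
  define d where "d t = integral {-R..R} (\<lambda>x. \<bar>gxx (x, t) * gy (x, t)\<bar>)" for t
  have c_cont: "continuous_on S c" and d_cont: "continuous_on S d" for S
    unfolding c_def d_def box_real(2)[symmetric]
    by (rule integral_continuous_on_param; auto intro!: continuous_intros simp: case_prod_beta)+
  have d_nonneg: "0 \<le> d t" for t
    unfolding d_def by (intro integral_nonneg integrable_continuous_interval continuous_intros) auto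
  have "(gx (x, y))\<^sup>2 = integral {-R..y} (\<lambda>t. 2 * gx (x, t) * gxy (x, t))" for x
    using True pderivs_vanish_outside[of x "-R" "[True]"]
    by (intro sq_eq_integral_of_deriv has_derivative_y_g) auto
  then have "integral {-R..R} (\<lambda>x. (gx (x, y))\<^sup>2) =
      integral {-R..R} (\<lambda>x. integral {-R..y} (\<lambda>t. 2 * gx (x, t) * gxy (x, t)))"
    by simp
  also have "\<dots> = integral {-R..y} (\<lambda>t. integral {-R..R} (\<lambda>x. 2 * gx (x, t) * gxy (x, t)))"
    unfolding box_real(2)[symmetric]
    by (rule integral_swap_continuous) (auto intro!: continuous_intros simp: case_prod_beta)
  also have "\<dots> = integral {-R..y} (\<lambda>t. 2 * c t)" by (simp add: c_def mult.assoc)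
  also have "\<dots> \<le> integral {-R..y} (\<lambda>t. 2 * d t)"
  proof (intro integral_le integrable_continuous_interval continuous_intros c_cont d_cont)
    show "2 * c t \<le> 2 * d t" for t
      using abs_integral_gx_gxy_le[of t] unfolding c_def d_def by linarith
  qed
  also have "\<dots> \<le> integral {-R..R} (\<lambda>t. 2 * d t)"
    using True d_nonneg by (intro integral_subset_le integrable_continuous_interval continuous_intros d_cont) auto
  also have "\<dots> = 2 * integral (centered_square R) (\<lambda>z. \<bar>gxx z * gy z\<bar>)"
    unfolding d_def by (simp add: integral_cbox_Pair_eq_iterated continuous_intros)
  finally show ?thesis .
qed

lemma integral_gx_fourth_le:
  "integral (centered_square R) (\<lambda>z. (gx z) ^ 4) \<le>
    4 * integral (centered_square R) (\<lambda>z. \<bar>gxx z * gy z\<bar>) * integral (centered_square R) (\<lambda>z. \<bar>gx z * gxx z\<bar>)"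
proof -
  define P where "P = integral (centered_square R) (\<lambda>z. \<bar>gxx z * gy z\<bar>)"
  define b where "b y = integral {-R..R} (\<lambda>s. \<bar>gx (s, y) * gxx (s, y)\<bar>)" for y
  have b_cont: "continuous_on S b" for S
    unfolding b_def box_real(2)[symmetric]
    by (rule integral_continuous_on_param) (auto intro!: continuous_intros simp: case_prod_beta)
  have b_nonneg: "0 \<le> b y" for y
    unfolding b_def by (intro integral_nonneg integrable_continuous_interval continuous_intros) auto
  have "integral {-R..R} (\<lambda>x. (gx (x, y)) ^ 4) \<le> 4 * P * b y" for y
  proof -
    have "(gx (x, y)) ^ 4 \<le> 2 * b y * (gx (x, y))\<^sup>2" for x
    proof -
      have "(gx (x, y))\<^sup>2 * (gx (x, y))\<^sup>2 \<le> (2 * b y) * (gx (x, y))\<^sup>2"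
        using gx_sq_le_line_integral[of x y] unfolding b_def by (intro mult_right_mono) auto
      then show ?thesis by (simp add: power2_eq_square power4_eq_xxxx mult.assoc)
    qed
    then have "integral {-R..R} (\<lambda>x. (gx (x, y)) ^ 4) \<le> integral {-R..R} (\<lambda>x. 2 * b y * (gx (x, y))\<^sup>2)"
      by (intro integral_le integrable_continuous_interval continuous_intros)
    also have "\<dots> = 2 * b y * integral {-R..R} (\<lambda>x. (gx (x, y))\<^sup>2)" by simp
    also have "\<dots> \<le> 2 * b y * (2 * P)"
      using line_integral_gx_sq_le[of y] b_nonneg[of y] unfolding P_def by (intro mult_left_mono) auto
    finally show ?thesis by (simp add: algebra_simps)
  qed
  then have "integral {-R..R} (\<lambda>y. integral {-R..R} (\<lambda>x. (gx (x, y)) ^ 4)) \<le> integral {-R..R} (\<lambda>y. 4 * P * b y)"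
    unfolding box_real(2)[symmetric]
    by (intro integral_le integrable_continuous continuous_intros b_cont integral_continuous_on_param)
      (auto intro!: continuous_intros simp: case_prod_beta)
  then show ?thesis
    unfolding P_def b_def by (simp add: integral_cbox_Pair_eq_iterated continuous_intros)
qed

lemma integral_gx_fourth_le_kinetic:
  "integral (centered_square R) (\<lambda>z. (gx z) ^ 4) \<le>
   4 * sqrt (integral (centered_square R) (\<lambda>z. (gx z)\<^sup>2)) * integral (centered_square R) (\<lambda>z. (gxx z)\<^sup>2 + (gy z)\<^sup>2)
     * sqrt (integral (centered_square R) (\<lambda>z. (gxx z)\<^sup>2 + (gy z)\<^sup>2))"
proof -
  define L V W where "L = integral (centered_square R) (\<lambda>z. (gx z)\<^sup>2)"
    and "V = integral (centered_square R) (\<lambda>z. (gxx z)\<^sup>2)"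
    and "W = integral (centered_square R) (\<lambda>z. (gy z)\<^sup>2)"
  define P Q where "P = integral (centered_square R) (\<lambda>z. \<bar>gxx z * gy z\<bar>)"
    and "Q = integral (centered_square R) (\<lambda>z. \<bar>gx z * gxx z\<bar>)"
  have VW: "integral (centered_square R) (\<lambda>z. (gxx z)\<^sup>2 + (gy z)\<^sup>2) = V + W"
    unfolding V_def W_def by (rule integral_add) (intro integrable_continuous continuous_intros)+
  have nonneg: "0 \<le> L" "0 \<le> V" "0 \<le> W" "0 \<le> P" "0 \<le> Q"
    unfolding L_def V_def W_def P_def Q_def
    by (intro integral_nonneg integrable_continuous continuous_intros; simp)+
  have "P \<le> sqrt V * sqrt W" "Q \<le> sqrt L * sqrt V"
    unfolding P_def Q_def L_def V_def W_def by (intro integral_abs_mult_le_sqrt_mult continuous_intros)+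
  then have "4 * P * Q \<le> 4 * (sqrt V * sqrt W) * (sqrt L * sqrt V)"
    using nonneg by (intro mult_mono) auto
  also have "\<dots> = 4 * sqrt L * V * sqrt W" using nonneg by (simp add: algebra_simps)
  also have "\<dots> \<le> 4 * sqrt L * (V + W) * sqrt (V + W)"
    using nonneg by (intro mult_mono) auto
  finally show ?thesis
    using integral_gx_fourth_le unfolding VW L_def P_def Q_def by linarith
qed

lemma Ykin_gx: "Ykin gx = integral (centered_square R) (\<lambda>z. (gxx z)\<^sup>2 + (gy z)\<^sup>2)"
proof -
  have eq: "(\<lambda>z. (px gx z)\<^sup>2 + (Dxinv (py gx) z)\<^sup>2) = (\<lambda>z. (gxx z)\<^sup>2 + (gy z)\<^sup>2)"
    using Dxinv_gxy by (simp add: pderivs.simps)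
  have "z \<in> centered_square R" if "(gxx z)\<^sup>2 + (gy z)\<^sup>2 \<noteq> 0" for z
    using that by (cases "gxx z = 0") (auto intro: pderivs_nonzero_in_square)
  then show ?thesis
    unfolding Ykin_def eq by (intro integral_lborel_eq_integral_cbox continuous_intros)
qed

lemma
  assumes "0 < n"
  shows integrable_gx_power: "integrable lborel (\<lambda>z. (gx z) ^ n)"
    and integral_gx_power: "integral\<^sup>L lborel (\<lambda>z. (gx z) ^ n) = integral (centered_square R) (\<lambda>z. (gx z) ^ n)"
proof -
  have supp: "z \<in> centered_square R" if "(gx z) ^ n \<noteq> 0" for z
    using that assms by (intro pderivs_nonzero_in_square[of "[True]"]) auto
  show "integrable lborel (\<lambda>z. (gx z) ^ n)"
    by (rule integrable_lborel_if_supp_in_cbox[OF _ supp]) (intro continuous_intros)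
  show "integral\<^sup>L lborel (\<lambda>z. (gx z) ^ n) = integral (centered_square R) (\<lambda>z. (gx z) ^ n)"
    by (rule integral_lborel_eq_integral_cbox[OF _ supp]) (intro continuous_intros)
qed

end

lemma YspaceE:
  assumes "f \<in> Yspace"
  obtains g r where "g \<in> C0inf" "supp_in_square g r" "0 \<le> r" "f = pderivs [True] g"
proof -
  obtain g where g: "g \<in> C0inf" "f = px g" using assms unfolding Yspace_def by blast
  moreover obtain r where "0 \<le> r" "supp_in_square g r" using C0inf_supp_in_square[OF g(1)] .
  ultimately show ?thesis using that by (simp add: pderivs.simps)
qed

lemma
  assumes "f \<in> Yspace"
  shows Yspace_integrable_power: "0 < n \<Longrightarrow> integrable lborel (\<lambda>z. (f z) ^ n)"
    and Yspace_borel_measurable: "f \<in> borel_measurable lborel"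
    and Ykin_nonneg: "0 \<le> Ykin f"
    and Yspace_integral_fourth_power_le:
      "integral\<^sup>L lborel (\<lambda>z. (f z) ^ 4) \<le> 4 * sqrt (L2sq f) * Ykin f * sqrt (Ykin f)"
proof -
  obtain g r where g: "g \<in> C0inf" "supp_in_square g r" "0 \<le> r" and f: "f = pderivs [True] g"
    using YspaceE[OF assms] .
  have R: "r < r + 1" by simp
  note smooth = smooth2_continuous_on[OF smooth2_g[OF g(1,2,3) R]]
  show "0 < n \<Longrightarrow> integrable lborel (\<lambda>z. (f z) ^ n)"
    unfolding f by (rule integrable_gx_power[OF g R])
  show "f \<in> borel_measurable lborel"
    unfolding f using borel_measurable_continuous_onI[OF smooth] by simp
  show "0 \<le> Ykin f"
    unfolding f Ykin_gx[OF g R]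
    by (intro integral_nonneg integrable_continuous continuous_intros smooth) simp
  show "integral\<^sup>L lborel (\<lambda>z. (f z) ^ 4) \<le> 4 * sqrt (L2sq f) * Ykin f * sqrt (Ykin f)"
    unfolding f L2sq_def Ykin_gx[OF g R] integral_gx_power[OF g R zero_less_numeral]
    by (rule integral_gx_fourth_le_kinetic[OF g R])
qed

lemma sqrt_Ykin_diff_le:
  assumes "f \<in> Yspace" "h \<in> Yspace"
  shows "\<bar>sqrt (Ykin f) - sqrt (Ykin h)\<bar> \<le> sqrt (Ykin (\<lambda>z. f z - h z))"
proof -
  obtain g1 r1 where g1: "g1 \<in> C0inf" "supp_in_square g1 r1" "0 \<le> r1" "f = pderivs [True] g1"
    using YspaceE[OF assms(1)] .
  obtain g2 r2 where g2: "g2 \<in> C0inf" "supp_in_square g2 r2" "0 \<le> r2" "h = pderivs [True] g2"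
    using YspaceE[OF assms(2)] .
  define r where "r = max r1 r2"
  define d where "d = (\<lambda>z. g1 z - g2 z)"
  have s1: "supp_in_square g1 r" and s2: "supp_in_square g2 r"
    using supp_in_square_mono g1(2) g2(2) unfolding r_def by auto
  have r: "0 \<le> r" "r < r + 1" using g1(3) by (auto simp: r_def)
  have sm: "smooth2 g1" "smooth2 g2" using g1 g2 unfolding C0inf_def by auto
  have pd: "pderivs ds d = (\<lambda>z. pderivs ds g1 z - pderivs ds g2 z)" for ds
    unfolding d_def by (rule pderivs_diff[OF sm])
  define F1 F2 :: "real \<times> real \<Rightarrow> real \<times> real"
    where "F1 z = (pderivs [True, True] g1 z, pderivs [False] g1 z)"
      and "F2 z = (pderivs [True, True] g2 z, pderivs [False] g2 z)" for z
  have sq_norm: "(norm (a::real, b::real))\<^sup>2 = a\<^sup>2 + b\<^sup>2" for a b by (simp add: norm_Pair)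
  have K1: "Ykin f = integral (centered_square (r + 1)) (\<lambda>z. (norm (F1 z))\<^sup>2)"
    using Ykin_gx[OF g1(1) s1 r] g1(4) by (simp add: F1_def sq_norm)
  have K2: "Ykin h = integral (centered_square (r + 1)) (\<lambda>z. (norm (F2 z))\<^sup>2)"
    using Ykin_gx[OF g2(1) s2 r] g2(4) by (simp add: F2_def sq_norm)
  have Kd: "Ykin (\<lambda>z. f z - h z) = integral (centered_square (r + 1)) (\<lambda>z. (norm (F1 z - F2 z))\<^sup>2)"
  proof -
    have "d \<in> C0inf" "supp_in_square d r"
      unfolding d_def by (rule C0inf_diff[OF g1(1) g2(1)], rule supp_in_square_diff[OF s1 s2])
    moreover have "(\<lambda>z. f z - h z) = pderivs [True] d" using pd g1(4) g2(4) by simp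
    ultimately show ?thesis using Ykin_gx[of d r "r + 1"] r by (simp add: pd F1_def F2_def sq_norm)
  qed
  have cont: "continuous_on (centered_square (r + 1)) F1" "continuous_on (centered_square (r + 1)) F2"
    unfolding F1_def F2_def using smooth2_continuous_on sm by (auto intro!: continuous_on_Pair)
  have "sqrt (Ykin f) \<le> sqrt (Ykin h) + sqrt (Ykin (\<lambda>z. f z - h z))"
    using sqrt_integral_norm_add_le[of _ _ F2 "\<lambda>z. F1 z - F2 z"] cont unfolding K1 K2 Kd
    by (simp add: continuous_on_diff)
  moreover have "sqrt (Ykin h) \<le> sqrt (Ykin f) + sqrt (Ykin (\<lambda>z. f z - h z))"
    using sqrt_integral_norm_add_le[of _ _ F1 "\<lambda>z. F2 z - F1 z"] cont unfolding K1 K2 Kd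
    by (simp add: continuous_on_diff norm_minus_commute)
  ultimately show ?thesis by linarith
qed

section \<open>Passage to X\<close>

lemma nn_integral_le_of_AE_tendsto:
  fixes F :: "nat \<Rightarrow> 'a \<Rightarrow> real" and B :: "nat \<Rightarrow> real"
  assumes F: "\<And>k. F k \<in> borel_measurable M"
    and lim: "AE z in M. (\<lambda>k. F k z) \<longlonglongrightarrow> G z"
    and bound: "eventually (\<lambda>k. (\<integral>\<^sup>+z. ennreal (F k z) \<partial>M) \<le> ennreal (B k)) sequentially"
    and B: "B \<longlonglongrightarrow> b"
  shows "(\<integral>\<^sup>+z. ennreal (G z) \<partial>M) \<le> ennreal b"
proof -
  have "(\<integral>\<^sup>+z. ennreal (G z) \<partial>M) = (\<integral>\<^sup>+z. liminf (\<lambda>k. ennreal (F k z)) \<partial>M)"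
    using lim by (intro nn_integral_cong_AE) (auto elim!: eventually_mono intro!: lim_imp_Liminf[symmetric] tendsto_ennrealI)
  also have "\<dots> \<le> liminf (\<lambda>k. \<integral>\<^sup>+z. ennreal (F k z) \<partial>M)"
    using F by (intro nn_integral_liminf) measurable
  also have "\<dots> \<le> liminf (\<lambda>k. ennreal (B k))"
    using bound by (rule Liminf_mono)
  also have "\<dots> = ennreal b"
    using B by (intro lim_imp_Liminf tendsto_ennrealI) auto
  finally show ?thesis .
qed

lemma L2sq_nonneg: "0 \<le> L2sq f"
  unfolding L2sq_def by (rule Bochner_Integration.integral_nonneg) simp

lemma approx_seq_Ykin_convergent:
  assumes "approx_seq u s"
  shows "convergent (\<lambda>n. Ykin (s n))"
proof -
  have Y: "\<And>n. s n \<in> Yspace" using assms unfolding approx_seq_def by blast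
  have "Cauchy (\<lambda>n. sqrt (Ykin (s n)))"
  proof (rule CauchyI)
    fix e :: real assume e: "e > 0"
    then obtain N where N: "\<forall>j\<ge>N. \<forall>k\<ge>N. Ynorm2 (\<lambda>z. s j z - s k z) < e\<^sup>2"
      using assms unfolding approx_seq_def by (meson zero_less_power)
    have "norm (sqrt (Ykin (s m)) - sqrt (Ykin (s n))) < e" if "N \<le> m" "N \<le> n" for m n
    proof -
      have "norm (sqrt (Ykin (s m)) - sqrt (Ykin (s n))) \<le> sqrt (Ykin (\<lambda>z. s m z - s n z))"
        using sqrt_Ykin_diff_le[OF Y Y] by simp
      also have "\<dots> \<le> sqrt (Ynorm2 (\<lambda>z. s m z - s n z))"
        unfolding Ynorm2_def using L2sq_nonneg by simp
      also have "\<dots> < sqrt (e\<^sup>2)" using N that by (intro real_sqrt_less_mono) simp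
      finally show ?thesis using e by simp
    qed
    then show "\<exists>M. \<forall>m\<ge>M. \<forall>n\<ge>M. norm (sqrt (Ykin (s m)) - sqrt (Ykin (s n))) < e" by blast
  qed
  then obtain l where "(\<lambda>n. sqrt (Ykin (s n))) \<longlonglongrightarrow> l"
    by (auto simp: Cauchy_convergent_iff convergent_def)
  then have "(\<lambda>n. (sqrt (Ykin (s n)))\<^sup>2) \<longlonglongrightarrow> l\<^sup>2" by (intro tendsto_intros)
  then show ?thesis using Ykin_nonneg[OF Y] by (auto simp: convergent_def)
qed

lemma Xkin_limit:
  assumes "u \<in> Xspace"
  obtains s where "approx_seq u s" "(\<lambda>n. Ykin (s n)) \<longlonglongrightarrow> Xkin u"
proof
  let ?s = "SOME s. approx_seq u s"
  show s: "approx_seq u ?s"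
    using assms unfolding Xspace_def by (metis (mono_tags) mem_Collect_eq someI_ex)
  show "(\<lambda>n. Ykin (?s n)) \<longlonglongrightarrow> Xkin u"
    unfolding Xkin_def using approx_seq_Ykin_convergent[OF s] by (simp add: convergent_LIMSEQ_iff)
qed

lemma Xkin_nonneg:
  assumes "u \<in> Xspace"
  shows "0 \<le> Xkin u"
proof -
  obtain s where s: "approx_seq u s" and lim: "(\<lambda>n. Ykin (s n)) \<longlonglongrightarrow> Xkin u"
    using Xkin_limit[OF assms] .
  have "\<And>n. s n \<in> Yspace" using s unfolding approx_seq_def by blast
  then show ?thesis using lim by (intro tendsto_lowerbound) (auto intro: always_eventually Ykin_nonneg)
qed

lemma approx_seq_L2sq_diff_lt:
  assumes s: "approx_seq u s"
  obtains N where "\<And>n k. N \<le> n \<Longrightarrow> N \<le> k \<Longrightarrow> L2sq (\<lambda>z. s n z - s k z) < 1"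
proof -
  have Y: "\<And>n. s n \<in> Yspace" using s unfolding approx_seq_def by blast
  obtain N where N: "\<forall>j\<ge>N. \<forall>k\<ge>N. Ynorm2 (\<lambda>z. s j z - s k z) < 1"
    using s unfolding approx_seq_def by (meson zero_less_one)
  have "L2sq (\<lambda>z. s n z - s k z) < 1" if "N \<le> n" "N \<le> k" for n k
  proof -
    have "L2sq (\<lambda>z. s n z - s k z) \<le> Ynorm2 (\<lambda>z. s n z - s k z)"
      unfolding Ynorm2_def using Ykin_nonneg[OF Yspace_diff[OF Y Y]] by simp
    also have "\<dots> < 1" using N that by blast
    finally show ?thesis .
  qed
  then show ?thesis using that by blast
qed

lemma approx_seq_L2sq_eventually_le:
  assumes s: "approx_seq u s" and u: "integrable lborel (\<lambda>z. (u z)\<^sup>2)"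
  shows "eventually (\<lambda>n. L2sq (s n) \<le> 2 * L2sq u + 2) sequentially"
proof -
  have Y: "\<And>n. s n \<in> Yspace" using s unfolding approx_seq_def by blast
  have lim: "AE z in lborel. (\<lambda>k. s k z) \<longlonglongrightarrow> u z" using s unfolding approx_seq_def by blast
  obtain N where N: "\<And>n k. N \<le> n \<Longrightarrow> N \<le> k \<Longrightarrow> L2sq (\<lambda>z. s n z - s k z) < 1"
    using approx_seq_L2sq_diff_lt[OF s] by blast
  have "L2sq (s n) \<le> 2 * L2sq u + 2" if n: "N \<le> n" for n
  proof -
    define F where "F k z = 2 * (u z)\<^sup>2 + 2 * (s n z - s k z)\<^sup>2" for k z
    have bound: "(\<integral>\<^sup>+z. ennreal (F k z) \<partial>lborel) \<le> ennreal (2 * L2sq u + 2)" if "N \<le> k" for k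
    proof -
      have D: "(\<lambda>z. s n z - s k z) \<in> Yspace" by (rule Yspace_diff[OF Y Y])
      have "2 * L2sq u + 2 * L2sq (\<lambda>z. s n z - s k z) \<le> 2 * L2sq u + 2"
        using N[OF n that] by simp
      moreover have "(\<integral>\<^sup>+z. ennreal (F k z) \<partial>lborel) = ennreal (2 * L2sq u + 2 * L2sq (\<lambda>z. s n z - s k z))"
        using u Yspace_integrable_power[OF D, of 2]
        unfolding F_def L2sq_def by (subst nn_integral_eq_integral) auto
      ultimately show ?thesis by (simp add: ennreal_leI)
    qed
    have "(\<integral>\<^sup>+z. ennreal (2 * (u z)\<^sup>2 + 2 * (s n z - u z)\<^sup>2) \<partial>lborel) \<le> ennreal (2 * L2sq u + 2)"
    proof (rule nn_integral_le_of_AE_tendsto[where F = F and B = "\<lambda>_. 2 * L2sq u + 2"])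
      have "(\<lambda>z. (s n z - s k z)\<^sup>2) \<in> borel_measurable lborel" for k
        by (intro borel_measurable_power borel_measurable_diff Yspace_borel_measurable Y)
      then show "F k \<in> borel_measurable lborel" for k
        unfolding F_def using borel_measurable_integrable[OF u]
        by (intro borel_measurable_add borel_measurable_times borel_measurable_const)
      show "AE z in lborel. (\<lambda>k. F k z) \<longlonglongrightarrow> 2 * (u z)\<^sup>2 + 2 * (s n z - u z)\<^sup>2"
        using lim unfolding F_def by eventually_elim (intro tendsto_intros)
    qed (use bound in \<open>auto simp: eventually_sequentially\<close>)
    moreover have "(s n z)\<^sup>2 \<le> 2 * (u z)\<^sup>2 + 2 * (s n z - u z)\<^sup>2" for z
      using zero_le_power2[of "s n z - 2 * u z"] by (simp add: power2_eq_square algebra_simps)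
    then have "(\<integral>\<^sup>+z. ennreal ((s n z)\<^sup>2) \<partial>lborel) \<le>
        (\<integral>\<^sup>+z. ennreal (2 * (u z)\<^sup>2 + 2 * (s n z - u z)\<^sup>2) \<partial>lborel)"
      by (intro nn_integral_mono ennreal_leI)
    ultimately show ?thesis
      unfolding L2sq_def using L2sq_nonneg[of u] by (intro integral_real_bounded) auto
  qed
  then show ?thesis unfolding eventually_sequentially by blast
qed

lemma Yspace_nn_integral_powr_le:
  assumes f: "f \<in> Yspace" and A: "L2sq f \<le> A" and t: "0 < t" and q: "2 \<le> q" "q \<le> 4"
  shows "(\<integral>\<^sup>+z. ennreal (\<bar>f z\<bar> powr q) \<partial>lborel) \<le>
    ennreal (t powr (q - 2) * A + t powr (q - 4) * (4 * sqrt A * Ykin f * sqrt (Ykin f)))"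
proof -
  have i2: "integrable lborel (\<lambda>z. (f z)\<^sup>2)" and i4: "integrable lborel (\<lambda>z. (f z) ^ 4)"
    using Yspace_integrable_power[OF f] by auto
  have "integral\<^sup>L lborel (\<lambda>z. (f z) ^ 4) \<le> 4 * sqrt (L2sq f) * Ykin f * sqrt (Ykin f)"
    by (rule Yspace_integral_fourth_power_le[OF f])
  also have "\<dots> \<le> 4 * sqrt A * Ykin f * sqrt (Ykin f)"
    using A Ykin_nonneg[OF f] by (intro mult_right_mono) auto
  finally have fourth: "integral\<^sup>L lborel (\<lambda>z. (f z) ^ 4) \<le> 4 * sqrt A * Ykin f * sqrt (Ykin f)" .
  have "(\<integral>\<^sup>+z. ennreal (\<bar>f z\<bar> powr q) \<partial>lborel) \<le>
      (\<integral>\<^sup>+z. ennreal (t powr (q - 2) * (f z)\<^sup>2 + t powr (q - 4) * (f z) ^ 4) \<partial>lborel)"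
    using t q by (intro nn_integral_mono ennreal_leI abs_powr_le_interpolation)
  also have "\<dots> = ennreal (t powr (q - 2) * L2sq f + t powr (q - 4) * integral\<^sup>L lborel (\<lambda>z. (f z) ^ 4))"
    using i2 i4 unfolding L2sq_def by (subst nn_integral_eq_integral) auto
  also have "\<dots> \<le> ennreal (t powr (q - 2) * A + t powr (q - 4) * (4 * sqrt A * Ykin f * sqrt (Ykin f)))"
    using A fourth by (intro ennreal_leI add_mono mult_left_mono) auto
  finally show ?thesis .
qed

lemma approx_seq_integral_powr_le:
  assumes s: "approx_seq u s" and A: "eventually (\<lambda>n. L2sq (s n) \<le> A) sequentially"
    and K: "(\<lambda>n. Ykin (s n)) \<longlonglongrightarrow> K" and t: "0 < t" and q: "2 \<le> q" "q \<le> 4"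
  shows "integral\<^sup>L lborel (\<lambda>z. \<bar>u z\<bar> powr q) \<le> t powr (q - 2) * A + t powr (q - 4) * (4 * sqrt A * K * sqrt K)"
proof (rule integral_real_bounded)
  have Y: "\<And>n. s n \<in> Yspace" using s unfolding approx_seq_def by blast
  have "eventually (\<lambda>n. 0 \<le> A) sequentially" using A by eventually_elim (use L2sq_nonneg order_trans in blast)
  then have A0: "0 \<le> A" by simp
  have K0: "0 \<le> K" using K Ykin_nonneg[OF Y] by (intro tendsto_lowerbound[OF K]) (auto intro: always_eventually)
  show "0 \<le> t powr (q - 2) * A + t powr (q - 4) * (4 * sqrt A * K * sqrt K)" using A0 K0 by simp
  show "(\<integral>\<^sup>+z. ennreal (\<bar>u z\<bar> powr q) \<partial>lborel) \<le> ennreal (t powr (q - 2) * A + t powr (q - 4) * (4 * sqrt A * K * sqrt K))"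
  proof (rule nn_integral_le_of_AE_tendsto[where F = "\<lambda>n z. \<bar>s n z\<bar> powr q"])
    show "(\<lambda>z. \<bar>s n z\<bar> powr q) \<in> borel_measurable lborel" for n
      by (intro measurable_abs_powr Yspace_borel_measurable Y)
    show "AE z in lborel. (\<lambda>n. \<bar>s n z\<bar> powr q) \<longlonglongrightarrow> \<bar>u z\<bar> powr q"
      using s unfolding approx_seq_def
      using q by (auto elim!: eventually_mono intro!: tendsto_powr2 tendsto_intros)
    show "eventually (\<lambda>n. (\<integral>\<^sup>+z. ennreal (\<bar>s n z\<bar> powr q) \<partial>lborel) \<le>
        ennreal (t powr (q - 2) * A + t powr (q - 4) * (4 * sqrt A * Ykin (s n) * sqrt (Ykin (s n))))) sequentially"
      using A by eventually_elim (rule Yspace_nn_integral_powr_le[OF Y _ t q])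
    show "(\<lambda>n. t powr (q - 2) * A + t powr (q - 4) * (4 * sqrt A * Ykin (s n) * sqrt (Ykin (s n))))
        \<longlonglongrightarrow> t powr (q - 2) * A + t powr (q - 4) * (4 * sqrt A * K * sqrt K)"
      by (intro tendsto_intros K)
  qed
qed

section \<open>Lower bound and coercivity of J\<close>

lemma powr_scaled_interpolation_le:
  fixes A K q :: real
  assumes A: "0 \<le> A" and K: "0 \<le> K"
  shows "((1 + K) powr (3 / 4)) powr (q - 2) * A + ((1 + K) powr (3 / 4)) powr (q - 4) * (4 * sqrt A * K * sqrt K)
    \<le> (A + 4 * sqrt A) * (1 + K) powr (3 * (q - 2) / 4)"
proof -
  have "K * sqrt K \<le> (1 + K) * sqrt (1 + K)" using K by (intro mult_mono) auto
  also have "\<dots> = (1 + K) powr 1 * (1 + K) powr (1 / 2)" using K by (simp add: powr_half_sqrt)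
  also have "\<dots> = (1 + K) powr (1 + 1 / 2)" by (rule powr_add[symmetric])
  finally have "K * sqrt K \<le> (1 + K) powr (3 / 2)" by simp
  then have "((1 + K) powr (3 / 4)) powr (q - 4) * (K * sqrt K) \<le>
      (1 + K) powr (3 * (q - 4) / 4) * (1 + K) powr (3 / 2)"
    using K by (simp add: powr_powr mult_left_mono)
  also have "\<dots> = (1 + K) powr (3 * (q - 2) / 4)"
    by (simp add: field_simps flip: powr_add)
  finally have "4 * sqrt A * (((1 + K) powr (3 / 4)) powr (q - 4) * (K * sqrt K)) \<le>
      4 * sqrt A * (1 + K) powr (3 * (q - 2) / 4)"
    using A by (intro mult_left_mono) auto
  moreover have "((1 + K) powr (3 / 4)) powr (q - 2) = (1 + K) powr (3 * (q - 2) / 4)"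
    using K by (simp add: powr_powr)
  ultimately show ?thesis by (simp add: algebra_simps)
qed

lemma Ssphere_integral_powr_le:
  assumes a: "0 < a" and u: "u \<in> Ssphere a" and q: "2 \<le> q" "q \<le> 4"
  shows "integral\<^sup>L lborel (\<lambda>z. \<bar>u z\<bar> powr q) \<le>
    ((2 * a\<^sup>2 + 2) + 4 * sqrt (2 * a\<^sup>2 + 2)) * (1 + Xkin u) powr (3 * (q - 2) / 4)"
proof -
  have X: "u \<in> Xspace" and L: "L2sq u = a\<^sup>2" using u unfolding Ssphere_def by auto
  \<comment> \<open>a non-integrable function has Lebesgue integral 0, and \<open>L2sq u = a\<^sup>2 \<noteq> 0\<close>\<close>
  have "integrable lborel (\<lambda>z. (u z)\<^sup>2)"
    using L a not_integrable_integral_eq unfolding L2sq_def by fastforce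
  moreover obtain s where s: "approx_seq u s" and K: "(\<lambda>n. Ykin (s n)) \<longlonglongrightarrow> Xkin u"
    using Xkin_limit[OF X] .
  ultimately have "eventually (\<lambda>n. L2sq (s n) \<le> 2 * a\<^sup>2 + 2) sequentially"
    using approx_seq_L2sq_eventually_le L by metis
  then have "integral\<^sup>L lborel (\<lambda>z. \<bar>u z\<bar> powr q) \<le>
      ((1 + Xkin u) powr (3 / 4)) powr (q - 2) * (2 * a\<^sup>2 + 2) +
      ((1 + Xkin u) powr (3 / 4)) powr (q - 4) * (4 * sqrt (2 * a\<^sup>2 + 2) * Xkin u * sqrt (Xkin u))"
    using Xkin_nonneg[OF X] by (intro approx_seq_integral_powr_le[OF s _ K _ q]) auto
  also have "\<dots> \<le> ((2 * a\<^sup>2 + 2) + 4 * sqrt (2 * a\<^sup>2 + 2)) * (1 + Xkin u) powr (3 * (q - 2) / 4)"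
    using Xkin_nonneg[OF X] by (intro powr_scaled_interpolation_le) auto
  finally show ?thesis .
qed

lemma Jfun_ge_quarter_Xkin:
  assumes q: "2 < q" "q < 10 / 3" and a: "0 < a"
  obtains C where "\<And>u. u \<in> Ssphere a \<Longrightarrow> Xkin u / 4 - C \<le> Jfun q u"
proof -
  define E where "E = (2 * a\<^sup>2 + 2) + 4 * sqrt (2 * a\<^sup>2 + 2)"
  define \<theta> where "\<theta> = 3 * (q - 2) / 4"
  have "0 < \<theta>" "\<theta> < 1" unfolding \<theta>_def using q by simp_all
  then obtain C where C: "\<And>x. 0 \<le> x \<Longrightarrow> (E / q) * x powr \<theta> \<le> 1 / 4 * x + C"
    using powr_le_linear_plus_const[of \<theta> "1 / 4" "E / q"] by auto
  have "Xkin u / 4 - (1 / 4 + C) \<le> Jfun q u" if u: "u \<in> Ssphere a" for u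
  proof -
    have K: "0 \<le> Xkin u" using u unfolding Ssphere_def by (auto intro: Xkin_nonneg)
    have "(1 / q) * integral\<^sup>L lborel (\<lambda>z. \<bar>u z\<bar> powr q) \<le> (1 / q) * (E * (1 + Xkin u) powr \<theta>)"
      using Ssphere_integral_powr_le[OF a u] q unfolding E_def \<theta>_def by (intro mult_left_mono) auto
    also have "\<dots> \<le> 1 / 4 * (1 + Xkin u) + C" using C[of "1 + Xkin u"] K by simp
    also have "\<dots> = 1 / 4 + Xkin u / 4 + C" by (simp add: algebra_simps)
    finally show ?thesis unfolding Jfun_def using K by linarith
  qed
  then show ?thesis using that by blast
qed

theorem lemma3p1:
  fixes q a :: real
  assumes "2 < q" and "q < 10 / 3" and "0 < a"
  shows "(\<exists>C. \<forall>u\<in>Ssphere a. C \<le> Jfun q u) \<and>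
         (\<forall>M. \<exists>R. \<forall>u\<in>Ssphere a. R \<le> Xnorm u \<longrightarrow> M \<le> Jfun q u)"
proof -
  obtain C where C: "\<And>u. u \<in> Ssphere a \<Longrightarrow> Xkin u / 4 - C \<le> Jfun q u"
    using Jfun_ge_quarter_Xkin[OF assms] by blast
  have K: "0 \<le> Xkin u" and L: "L2sq u = a\<^sup>2" if "u \<in> Ssphere a" for u
    using that unfolding Ssphere_def by (auto intro: Xkin_nonneg)
  have "- C \<le> Jfun q u" if "u \<in> Ssphere a" for u
    using C[OF that] K[OF that] by linarith
  moreover have "\<forall>u\<in>Ssphere a. sqrt (a\<^sup>2 + 4 * \<bar>M + C\<bar>) \<le> Xnorm u \<longrightarrow> M \<le> Jfun q u" for M
  proof (intro ballI impI)
    fix u assume u: "u \<in> Ssphere a" and R: "sqrt (a\<^sup>2 + 4 * \<bar>M + C\<bar>) \<le> Xnorm u"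
    then have "a\<^sup>2 + 4 * \<bar>M + C\<bar> \<le> Xkin u + a\<^sup>2"
      using K[OF u] unfolding Xnorm_def L[OF u] by simp
    then show "M \<le> Jfun q u" using C[OF u] abs_ge_self[of "M + C"] by argo
  qed
  ultimately show ?thesis by blast
qed

end
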